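(* The multiplicity of $\vartheta[m]$ along $q_\nu=0$ ($\nu=0,2,1$ respectively) in the coordinates $$q_0=e^{2\pi i (z_0+z_1)/8},\quad q_2=e^{2\pi i (z_2+z_1)/8},\quad q_1=e^{-2\pi i z_1/8}$$ is $$a_1,\quad a_2,\quad a_1+a_2-2a_1a_2,\qquad m={a\choose b},\ a={a_1\choose a_2}.$$
   Context: Genus two, $Z=\begin{pmatrix}z_0&z_1\\ z_1&z_2\end{pmatrix}\in\mathbb{H}_2$. For a theta characteristic $m={a\choose b}$, $a,b\in\{0,1\}^2$, the theta constant is $\vartheta[m](Z)=\sum_{g\in\mathbb{Z}^2}e^{\pi i(Z[g+a/2]+{}^tb(g+a/2))}$. These are periodic under $Z\mapsto Z+8S$, $S$ integral symmetric, so they can be written as Laurent series in the normal coordinates $q_0,q_1,q_2$ above; these are in fact power series, hence extend holomorphically to the completed Reinhardt domain $\tilde D=D\cup\{q\in\mathbb{C}^3;\ q_0q_1q_2=0\}$, where $D$ is the image of $\mathbb{H}_2$ under $Z\mapsto(q_0,q_1,q_2)$. The multiplicity refers to the vanishing order of this power series along the divisor $q_\nu=0$ (with $a_1,a_2\in\{0,1\}\subset\mathbb{Z}$). *)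

theory Defs
  imports "HOL-Analysis.Analysis"
begin

text \<open>A point Z = ((z0, z1), (z1, z2)) of the Siegel upper half space of genus two is
represented by the triple (z0, z1, z2).\<close>

definition siegel_H2 :: "(complex \<times> complex \<times> complex) set" where
  "siegel_H2 = {(z0, z1, z2). Im z0 > 0 \<and> Im z0 * Im z2 - (Im z1)^2 > 0}"

definition quadZ :: "complex \<times> complex \<times> complex \<Rightarrow> real \<Rightarrow> real \<Rightarrow> complex" where
  "quadZ Z x1 x2 = (case Z of (z0, z1, z2) \<Rightarrow>
      z0 * of_real (x1^2) + 2 * z1 * of_real (x1 * x2) + z2 * of_real (x2^2))"

definition theta_const :: "int \<Rightarrow> int \<Rightarrow> int \<Rightarrow> int \<Rightarrow> complex \<times> complex \<times> complex \<Rightarrow> complex" where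
  "theta_const a1 a2 b1 b2 Z =
     (\<Sum>\<^sub>\<infinity>(g1, g2) \<in> (UNIV :: (int \<times> int) set).
        (let x1 = real_of_int g1 + real_of_int a1 / 2; x2 = real_of_int g2 + real_of_int a2 / 2 in
         exp (pi * \<i> * (quadZ Z x1 x2 + of_real (real_of_int b1 * x1 + real_of_int b2 * x2)))))"

definition qcoords :: "complex \<times> complex \<times> complex \<Rightarrow> complex \<times> complex \<times> complex" where
  "qcoords Z = (case Z of (z0, z1, z2) \<Rightarrow>
     (exp (2 * pi * \<i> * (z0 + z1) / 8), exp (- 2 * pi * \<i> * z1 / 8), exp (2 * pi * \<i> * (z2 + z1) / 8)))"

definition is_q_expansion :: "(nat \<times> nat \<times> nat \<Rightarrow> complex) \<Rightarrow> (complex \<times> complex \<times> complex \<Rightarrow> complex) \<Rightarrow> bool" where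
  "is_q_expansion c f \<longleftrightarrow>
     (\<forall>Z \<in> siegel_H2. case qcoords Z of (q0, q1, q2) \<Rightarrow>
        ((\<lambda>(k0, k1, k2). c (k0, k1, k2) * q0 ^ k0 * q1 ^ k1 * q2 ^ k2) has_sum f Z) UNIV)"

definition mult_q0 :: "(nat \<times> nat \<times> nat \<Rightarrow> complex) \<Rightarrow> nat" where
  "mult_q0 c = (LEAST k. \<exists>k1 k2. c (k, k1, k2) \<noteq> 0)"
definition mult_q1 :: "(nat \<times> nat \<times> nat \<Rightarrow> complex) \<Rightarrow> nat" where
  "mult_q1 c = (LEAST k. \<exists>k0 k2. c (k0, k, k2) \<noteq> 0)"
definition mult_q2 :: "(nat \<times> nat \<times> nat \<Rightarrow> complex) \<Rightarrow> nat" where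
  "mult_q2 c = (LEAST k. \<exists>k0 k1. c (k0, k1, k) \<noteq> 0)"

end

theory Submission
  imports Defs
begin

text \<open>Writing \<open>x = g + a/2\<close>, each term of the theta series is a root of unity times
  \<open>exp (\<pi> i Z[x])\<close>, which is a monomial in \<open>q\<^sub>0, q\<^sub>1, q\<^sub>2\<close> with the square exponents
  \<open>(2x\<^sub>1)\<^sup>2, (2x\<^sub>1 - 2x\<^sub>2)\<^sup>2, (2x\<^sub>2)\<^sup>2\<close>. Collecting the terms by exponent gives a power series,
  absolutely convergent by a Gaussian bound, and unique because the image of \<open>\<bbbH>\<^sub>2\<close> is the whole
  punctured polydisc. An odd integer has square at least 1, so every exponent dominates
  \<open>(a\<^sub>1, (a\<^sub>1 - a\<^sub>2)\<^sup>2, a\<^sub>2)\<close>; this minimal exponent is attained only by \<open>g = 0\<close> and \<open>g = -a\<close>,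
  whose signs \<open>exp (\<plusminus>\<pi> i b\<cdot>a/2)\<close> agree because \<open>b\<cdot>a\<close> is even, so its coefficient does not vanish.\<close>

section \<open>Power series and elementary estimates\<close>

lemma powser_coeff_eq_0_if_has_sum_0:
  fixes d :: "nat \<Rightarrow> complex"
  assumes sum0: "\<And>z. z \<in> ball 0 1 - {0} \<Longrightarrow> ((\<lambda>n. d n * z ^ n) has_sum 0) UNIV"
  shows "d n = 0"
proof (induction n rule: less_induct)
  case (less n)
  have tail: "(\<lambda>j. d (j + n) * z ^ j) sums 0" if z: "z \<in> ball 0 1 - {0}" for z
  proof -
    have "(\<lambda>i. d (i + n) * z ^ (i + n)) sums 0"
      using sums_split_initial_segment[OF has_sum_imp_sums[OF sum0[OF z]], of n] less by simp
    from sums_mult[OF this, of "inverse (z ^ n)"] show ?thesis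
      using z by (simp add: power_add field_simps)
  qed
  define g where "g z = (\<Sum>j. d (j + n) * z ^ j)" for z :: complex
  have "summable (\<lambda>j. d (j + n) * (1/2) ^ j)"
    using tail[of "1/2"] by (auto simp: sums_iff)
  then have "isCont g 0"
    unfolding g_def by (rule isCont_powser) simp
  then have "(g \<longlongrightarrow> g 0) (at 0)"
    by (simp add: isCont_def)
  moreover have "\<forall>\<^sub>F z in at 0. g z = 0"
  proof -
    have "\<forall>\<^sub>F z in at (0::complex). z \<in> ball 0 1 - {0}"
      by (intro eventually_at_in_open) auto
    then show ?thesis
      by eventually_elim (use tail in \<open>auto simp: g_def sums_iff\<close>)
  qed
  then have "(g \<longlongrightarrow> 0) (at 0)"
    by (rule tendsto_eventually)
  ultimately have "g 0 = 0"
    using tendsto_unique at_neq_bot by blast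
  then show ?case
    using powser_zero[of "\<lambda>j. d (j + n)"] by (simp add: g_def)
qed

lemma powser_slice_has_sum_0:
  fixes d :: "nat \<times> 'a \<Rightarrow> complex" and t :: "'a \<Rightarrow> complex"
  assumes sum0: "\<And>z. z \<in> ball 0 1 - {0} \<Longrightarrow> ((\<lambda>(n, k). d (n, k) * z ^ n * t k) has_sum 0) UNIV"
  shows "((\<lambda>k. d (n, k) * t k) has_sum 0) UNIV"
proof -
  have summable: "(\<lambda>k. d (m, k) * t k) summable_on UNIV" for m
  proof -
    have "(\<lambda>(n, k). d (n, k) * (1/2) ^ n * t k) summable_on Sigma UNIV (\<lambda>_. UNIV)"
      using sum0[of "1/2"] by (auto simp: summable_on_def)
    from summable_on_cmult_right[OF summable_on_SigmaD1[OF this, of m], of "2 ^ m"]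
    show ?thesis
      by (simp add: power_divide)
  qed
  define D where "D m = (\<Sum>\<^sub>\<infinity>k. d (m, k) * t k)" for m
  have "D m = 0" for m
  proof (rule powser_coeff_eq_0_if_has_sum_0)
    fix z :: complex
    assume z: "z \<in> ball 0 1 - {0}"
    show "((\<lambda>n. D n * z ^ n) has_sum 0) UNIV"
    proof (rule has_sum_Sigma')
      show "((\<lambda>(n, k). d (n, k) * z ^ n * t k) has_sum 0) (Sigma UNIV (\<lambda>_. UNIV))"
        using sum0[OF z] by simp
      fix n
      show "((\<lambda>k. case (n, k) of (n, k) \<Rightarrow> d (n, k) * z ^ n * t k) has_sum D n * z ^ n) UNIV"
        using has_sum_cmult_right[OF has_sum_infsum[OF summable[of n]], of "z ^ n"]
        by (simp add: D_def algebra_simps)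
    qed
  qed
  then show ?thesis
    using has_sum_infsum[OF summable[of n]] by (simp add: D_def)
qed

lemma powser3_coeff_eq_0_if_has_sum_0:
  fixes d :: "nat \<times> nat \<times> nat \<Rightarrow> complex"
  assumes sum0: "\<And>q0 q1 q2. q0 \<in> ball 0 1 - {0} \<Longrightarrow> q1 \<in> ball 0 1 - {0} \<Longrightarrow> q2 \<in> ball 0 1 - {0} \<Longrightarrow>
     ((\<lambda>(k0, k1, k2). d (k0, k1, k2) * q0 ^ k0 * q1 ^ k1 * q2 ^ k2) has_sum 0) UNIV"
  shows "d k = 0"
proof -
  obtain k0 k1 k2 where k: "k = (k0, k1, k2)"
    by (cases k) auto
  have slice12: "((\<lambda>(k1, k2). d (k0, k1, k2) * (q1 ^ k1 * q2 ^ k2)) has_sum 0) UNIV"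
    if q: "q1 \<in> ball 0 1 - {0}" "q2 \<in> ball 0 1 - {0}" for q1 q2
    using powser_slice_has_sum_0[where t = "\<lambda>(k1, k2). q1 ^ k1 * q2 ^ k2", of "\<lambda>(n, k). d (n, k)"]
      sum0[OF _ q] by (simp add: case_prod_unfold mult.assoc)
  have slice2: "((\<lambda>k2. d (k0, k1, k2) * q2 ^ k2) has_sum 0) UNIV"
    if q2: "q2 \<in> ball 0 1 - {0}" for q2
    using powser_slice_has_sum_0[where t = "\<lambda>k2. q2 ^ k2", of "\<lambda>(n, k). d (k0, n, k)"]
      slice12[OF _ q2] by (simp add: case_prod_unfold mult.assoc)
  show ?thesis
    unfolding k by (rule powser_coeff_eq_0_if_has_sum_0) (rule slice2)
qed

lemma mult_q_eqI:
  assumes "c (k0, k1, k2) \<noteq> 0"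
    and "\<And>l0 l1 l2. c (l0, l1, l2) \<noteq> 0 \<Longrightarrow> k0 \<le> l0 \<and> k1 \<le> l1 \<and> k2 \<le> l2"
  shows "mult_q0 c = k0" and "mult_q1 c = k1" and "mult_q2 c = k2"
  unfolding mult_q0_def mult_q1_def mult_q2_def by (rule Least_equality; use assms in blast)+

lemma summable_on_geometric_int:
  fixes r :: real
  assumes "0 \<le> r" "r < 1"
  shows "(\<lambda>n::int. r ^ nat \<bar>n\<bar>) summable_on UNIV"
proof -
  have geometric: "(\<lambda>n::nat. r ^ n) summable_on UNIV"
    using assms by (intro summable_nonneg_imp_summable_on) (simp_all add: summable_geometric)
  have "(\<lambda>n::int. r ^ nat \<bar>n\<bar>) summable_on range int"
    using summable_on_reindex[of int UNIV "\<lambda>n. r ^ nat \<bar>n\<bar>"] geometric by (simp add: o_def)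
  moreover have "(\<lambda>n::int. r ^ nat \<bar>n\<bar>) summable_on range (\<lambda>n. - int n)"
    using summable_on_reindex[of "\<lambda>n. - int n" UNIV "\<lambda>n. r ^ nat \<bar>n\<bar>"] geometric
    by (simp add: o_def inj_on_def)
  moreover have "range int \<union> range (\<lambda>n. - int n) = UNIV"
  proof -
    have "x \<in> range int \<union> range (\<lambda>n. - int n)" for x :: int
      using image_eqI[of x int "nat x"] image_eqI[of x "\<lambda>n. - int n" "nat (- x)"]
      by (cases "x \<ge> 0") auto
    then show ?thesis
      by blast
  qed
  ultimately show ?thesis
    by (metis summable_on_union)
qed

lemma summable_on_gaussian_int:
  fixes c s :: real
  assumes c: "c > 0" and s: "0 \<le> s" "s \<le> 1/2"
  shows "(\<lambda>n::int. exp (- c * (real_of_int n + s)^2)) summable_on UNIV"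
proof (rule summable_on_comparison_test)
  show "(\<lambda>n::int. exp c * exp (-c) ^ nat \<bar>n\<bar>) summable_on UNIV"
    using c by (intro summable_on_cmult_right summable_on_geometric_int) auto
  fix n :: int
  show "0 \<le> exp (- c * (real_of_int n + s)^2)"
    by simp
  have "(real_of_int n + s)^2 \<ge> \<bar>real_of_int n\<bar> - 1"
  proof -
    define x where "x = real_of_int n + s"
    have "(x - 1/2)^2 = x^2 - x + 1/4" "(x + 1/2)^2 = x^2 + x + 1/4"
      by (simp_all add: power2_eq_square algebra_simps)
    moreover have "(x - 1/2)^2 \<ge> 0" "(x + 1/2)^2 \<ge> 0"
      by simp_all
    ultimately show ?thesis
      using s unfolding x_def by (cases "n \<ge> 0") simp_all
  qed
  then have "c * \<bar>real_of_int n\<bar> \<le> c * (1 + (real_of_int n + s)^2)"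
    using c by (intro mult_left_mono) auto
  then have "exp (- c * (real_of_int n + s)^2) \<le> exp (c + - c * \<bar>real_of_int n\<bar>)"
    by (simp add: algebra_simps)
  also have "\<dots> = exp c * exp (of_nat (nat \<bar>n\<bar>) * - c)"
    unfolding exp_add by (simp add: mult.commute)
  also have "\<dots> = exp c * exp (-c) ^ nat \<bar>n\<bar>"
    by (simp only: exp_of_nat_mult)
  finally show "exp (- c * (real_of_int n + s)^2) \<le> exp c * exp (-c) ^ nat \<bar>n\<bar>" .
qed

lemma summable_on_mult_nonneg:
  fixes u :: "'a \<Rightarrow> real" and v :: "'b \<Rightarrow> real"
  assumes "u summable_on UNIV" "v summable_on UNIV" "\<And>x. u x \<ge> 0" "\<And>y. v y \<ge> 0"
  shows "(\<lambda>(x, y). u x * v y) summable_on UNIV"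
proof -
  have "(\<lambda>(x, y). u x * v y) summable_on Sigma UNIV (\<lambda>_. UNIV)"
  proof (rule summable_on_SigmaI[where g = "\<lambda>x. u x * infsum v UNIV"])
    show "((\<lambda>y. case (x, y) of (x, y) \<Rightarrow> u x * v y) has_sum u x * infsum v UNIV) UNIV" for x
      using has_sum_cmult_right[OF has_sum_infsum[OF assms(2)]] by simp
    show "(\<lambda>x. u x * infsum v UNIV) summable_on UNIV"
      using assms(1) by (rule summable_on_cmult_left)
  qed (use assms in auto)
  then show ?thesis
    by simp
qed

text \<open>A positive definite binary form dominates \<open>\<mu> |x|\<^sup>2\<close> for \<open>\<mu> = det / (2 trace)\<close>:
  subtracting \<open>\<mu>\<close> from the diagonal leaves the determinant \<open>det/2 + \<mu>\<^sup>2 \<ge> 0\<close>.\<close>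

lemma pos_def_binary_form_ge:
  fixes y0 y1 y2 x1 x2 :: real
  assumes y0: "y0 > 0" and det: "y0 * y2 - y1^2 > 0"
  defines "mu \<equiv> (y0 * y2 - y1^2) / (2 * (y0 + y2))"
  shows "mu > 0" and "y0 * x1^2 + 2 * y1 * x1 * x2 + y2 * x2^2 \<ge> mu * x1^2 + mu * x2^2"
proof -
  have "y0 * y2 > 0"
    using det by (smt (verit) zero_le_power2)
  then have y2: "y2 > 0"
    using y0 by (simp add: zero_less_mult_iff)
  show mu: "mu > 0"
    unfolding mu_def using det y0 y2 by simp
  have "mu * (2 * (y0 + y2)) = y0 * y2 - y1^2"
    unfolding mu_def using y0 y2 by simp
  then have mu_trace: "2 * mu * y0 + 2 * mu * y2 = y0 * y2 - y1^2"
    by (simp add: algebra_simps)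
  define A where "A = y0 - mu"
  define C where "C = y2 - mu"
  have "2 * mu * y0 > 0"
    using mu y0 by simp
  then have "(2 * mu) * y2 < y0 * y2"
    using mu_trace zero_le_power2[of y1] by linarith
  then have "2 * mu < y0"
    using y2 by simp
  then have A: "A > 0"
    unfolding A_def using mu by simp
  have "A * C - y1^2 = mu * (y0 + y2) + mu^2"
    using mu_trace unfolding A_def C_def by (simp add: algebra_simps power2_eq_square)
  then have AC: "A * C - y1^2 \<ge> 0"
    using mu y0 y2 by simp
  have "A * (A * x1^2 + 2 * y1 * x1 * x2 + C * x2^2) = (A * x1 + y1 * x2)^2 + (A * C - y1^2) * x2^2"
    by (simp add: algebra_simps power2_eq_square)
  also have "\<dots> \<ge> 0"
    using AC by simp
  finally have "A * x1^2 + 2 * y1 * x1 * x2 + C * x2^2 \<ge> 0"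
    using A by (simp add: zero_le_mult_iff)
  then show "y0 * x1^2 + 2 * y1 * x1 * x2 + y2 * x2^2 \<ge> mu * x1^2 + mu * x2^2"
    unfolding A_def C_def by (simp add: algebra_simps)
qed

lemma abs_le_power2_int: "\<bar>y\<bar> \<le> (y::int)^2"
proof (cases "y = 0")
  case False
  then have "\<bar>y\<bar> * 1 \<le> \<bar>y\<bar> * \<bar>y\<bar>"
    by (intro mult_left_mono) auto
  then show ?thesis
    by (simp add: power2_eq_square)
qed simp

lemma power2_le_power2_two_mult_add:
  fixes a g :: int
  assumes "\<bar>a\<bar> \<le> 1"
  shows "a^2 \<le> (2 * g + a)^2"
proof (cases "a = 0")
  case False
  then have "2 * g + a \<noteq> 0"
    using assms by presburger
  then have "1 \<le> (2 * g + a)^2"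
    using abs_le_power2_int[of "2 * g + a"] by linarith
  moreover have "a^2 \<le> 1"
    using assms by (simp add: abs_square_le_1)
  ultimately show ?thesis
    by linarith
qed simp

lemma power2_two_mult_add_eq_iff:
  fixes a g :: int
  shows "(2 * g + a)^2 = a^2 \<longleftrightarrow> g = 0 \<or> g = - a"
  by (subst power2_eq_iff) auto

lemma of_nat_nat_power2: "(of_nat (nat (y^2)) :: 'a::comm_ring_1) = (of_int y)^2"
  by (simp add: of_nat_nat)

section \<open>Normal coordinates\<close>

definition q_log :: "complex \<Rightarrow> complex" where
  "q_log q = - 4 * \<i> * Ln q / of_real pi"

lemma exp_q_log: "q \<noteq> 0 \<Longrightarrow> exp (2 * of_real pi * \<i> * q_log q / 8) = q"
  unfolding q_log_def by (simp add: field_simps)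

lemma Im_q_log_pos:
  assumes "q \<in> ball 0 1 - {0}"
  shows "Im (q_log q) > 0"
proof -
  have "Re (Ln q) < 0"
    using assms by (simp add: Re_Ln ln_less_zero)
  then show ?thesis
    by (simp add: q_log_def Im_divide mult_neg_pos divide_neg_pos)
qed

text \<open>With \<open>w\<^sub>\<nu> = q_log q\<^sub>\<nu>\<close>, the preimage \<open>Z = (w\<^sub>0 + w\<^sub>1, -w\<^sub>1, w\<^sub>2 + w\<^sub>1)\<close> has
  \<open>Im z\<^sub>0 Im z\<^sub>2 - (Im z\<^sub>1)\<^sup>2 = y\<^sub>0 y\<^sub>1 + y\<^sub>0 y\<^sub>2 + y\<^sub>1 y\<^sub>2 > 0\<close> where \<open>y\<^sub>\<nu> = Im w\<^sub>\<nu>\<close>.\<close>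

lemma qcoords_onto_punctured_polydisc:
  assumes "q0 \<in> ball 0 1 - {0}" "q1 \<in> ball 0 1 - {0}" "q2 \<in> ball 0 1 - {0}"
  shows "\<exists>Z\<in>siegel_H2. qcoords Z = (q0, q1, q2)"
proof
  let ?Z = "(q_log q0 + q_log q1, - q_log q1, q_log q2 + q_log q1)"
  have "Im (q_log q0) > 0" "Im (q_log q1) > 0" "Im (q_log q2) > 0"
    using Im_q_log_pos assms by auto
  then show "?Z \<in> siegel_H2"
    by (auto simp: siegel_H2_def algebra_simps power2_eq_square intro!: add_pos_pos mult_pos_pos)
  show "qcoords ?Z = (q0, q1, q2)"
    using assms exp_q_log[of q0] exp_q_log[of q1] exp_q_log[of q2]
    by (simp add: qcoords_def mult_ac)
qed

lemma q_expansion_unique: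
  assumes "is_q_expansion c f" and "is_q_expansion c' f"
  shows "c = c'"
proof
  fix k
  have "c k - c' k = 0"
  proof (rule powser3_coeff_eq_0_if_has_sum_0[of "\<lambda>k. c k - c' k"])
    fix q0 q1 q2 :: complex
    assume "q0 \<in> ball 0 1 - {0}" "q1 \<in> ball 0 1 - {0}" "q2 \<in> ball 0 1 - {0}"
    then obtain Z where Z: "Z \<in> siegel_H2" "qcoords Z = (q0, q1, q2)"
      using qcoords_onto_punctured_polydisc by blast
    have expansion_at_Z: "((\<lambda>(k0, k1, k2). d (k0, k1, k2) * q0 ^ k0 * q1 ^ k1 * q2 ^ k2) has_sum f Z) UNIV"
      if "is_q_expansion d f" for d
      using that Z unfolding is_q_expansion_def by fastforce
    from has_sum_add[OF expansion_at_Z[OF assms(1)] has_sum_uminusI[OF expansion_at_Z[OF assms(2)]]]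
    show "((\<lambda>(k0, k1, k2). (c (k0, k1, k2) - c' (k0, k1, k2)) * q0 ^ k0 * q1 ^ k1 * q2 ^ k2) has_sum 0) UNIV"
      by (simp add: case_prod_unfold algebra_simps)
  qed
  then show "c k = c' k"
    by simp
qed

section \<open>The theta series as a power series\<close>

definition theta_term :: "int \<Rightarrow> int \<Rightarrow> int \<Rightarrow> int \<Rightarrow> complex \<times> complex \<times> complex \<Rightarrow> int \<times> int \<Rightarrow> complex" where
  "theta_term a1 a2 b1 b2 Z = (\<lambda>(g1, g2).
     (let x1 = real_of_int g1 + real_of_int a1 / 2; x2 = real_of_int g2 + real_of_int a2 / 2 in
      exp (pi * \<i> * (quadZ Z x1 x2 + of_real (real_of_int b1 * x1 + real_of_int b2 * x2)))))"

lemma theta_const_eq_infsum: "theta_const a1 a2 b1 b2 Z = infsum (theta_term a1 a2 b1 b2 Z) UNIV"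
  unfolding theta_const_def theta_term_def ..

definition theta_sign :: "int \<Rightarrow> int \<Rightarrow> int \<Rightarrow> int \<Rightarrow> int \<times> int \<Rightarrow> complex" where
  "theta_sign a1 a2 b1 b2 = (\<lambda>(g1, g2).
     exp (pi * \<i> * of_real (real_of_int b1 * (real_of_int g1 + real_of_int a1 / 2)
                           + real_of_int b2 * (real_of_int g2 + real_of_int a2 / 2))))"

text \<open>The exponents come from \<open>Z[x] = (z\<^sub>0 + z\<^sub>1) x\<^sub>1\<^sup>2 - z\<^sub>1 (x\<^sub>1 - x\<^sub>2)\<^sup>2 + (z\<^sub>2 + z\<^sub>1) x\<^sub>2\<^sup>2\<close>
  with \<open>x = g + a/2\<close>.\<close>

definition theta_exponents :: "int \<Rightarrow> int \<Rightarrow> int \<times> int \<Rightarrow> nat \<times> nat \<times> nat" where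
  "theta_exponents a1 a2 = (\<lambda>(g1, g2).
     (nat ((2 * g1 + a1)^2), nat ((2 * (g1 - g2) + (a1 - a2))^2), nat ((2 * g2 + a2)^2)))"

definition q_monomial :: "complex \<times> complex \<times> complex \<Rightarrow> nat \<times> nat \<times> nat \<Rightarrow> complex" where
  "q_monomial = (\<lambda>(q0, q1, q2) (k0, k1, k2). q0 ^ k0 * q1 ^ k1 * q2 ^ k2)"

lemma theta_term_eq_sign_mult_monomial:
  "theta_term a1 a2 b1 b2 Z g = theta_sign a1 a2 b1 b2 g * q_monomial (qcoords Z) (theta_exponents a1 a2 g)"
proof -
  obtain z0 z1 z2 where Z: "Z = (z0, z1, z2)"
    by (cases Z) auto
  obtain g1 g2 where g: "g = (g1, g2)"
    by (cases g) auto
  define x1 :: complex where "x1 = of_int g1 + of_int a1 / 2"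
  define x2 :: complex where "x2 = of_int g2 + of_int a2 / 2"
  define w :: "complex \<Rightarrow> complex" where "w z = 2 * of_real pi * \<i> * z / 8" for z
  have "q_monomial (qcoords Z) (theta_exponents a1 a2 g) =
      exp (of_nat (nat ((2 * g1 + a1)^2)) * w (z0 + z1))
      * exp (of_nat (nat ((2 * (g1 - g2) + (a1 - a2))^2)) * w (- z1))
      * exp (of_nat (nat ((2 * g2 + a2)^2)) * w (z2 + z1))"
    unfolding exp_of_nat_mult by (simp add: q_monomial_def qcoords_def theta_exponents_def Z g w_def mult_ac)
  also have "\<dots> = exp (of_real pi * \<i> * (z0 * x1^2 + 2 * z1 * (x1 * x2) + z2 * x2^2))"
  proof -
    have "of_nat (nat ((2 * g1 + a1)^2)) = 4 * x1^2"
      and "of_nat (nat ((2 * (g1 - g2) + (a1 - a2))^2)) = 4 * (x1 - x2)^2"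
      and "of_nat (nat ((2 * g2 + a2)^2)) = 4 * x2^2"
      unfolding of_nat_nat_power2 x1_def x2_def by (simp_all add: power2_eq_square algebra_simps)
    then have "of_nat (nat ((2 * g1 + a1)^2)) * w (z0 + z1)
        + of_nat (nat ((2 * (g1 - g2) + (a1 - a2))^2)) * w (- z1)
        + of_nat (nat ((2 * g2 + a2)^2)) * w (z2 + z1)
        = of_real pi * \<i> * (z0 * x1^2 + 2 * z1 * (x1 * x2) + z2 * x2^2)"
      by (simp only:) (simp add: w_def power2_eq_square field_simps)
    then show ?thesis
      by (simp only: exp_add[symmetric])
  qed
  finally show ?thesis
    unfolding theta_term_def theta_sign_def Z g x1_def x2_def
    by (simp add: Let_def quadZ_def exp_add[symmetric] algebra_simps)
qed

lemma norm_theta_term: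
  "norm (theta_term a1 a2 b1 b2 (z0, z1, z2) (g1, g2)) =
     exp (- pi * (Im z0 * (real_of_int g1 + real_of_int a1 / 2)^2
        + 2 * Im z1 * (real_of_int g1 + real_of_int a1 / 2) * (real_of_int g2 + real_of_int a2 / 2)
        + Im z2 * (real_of_int g2 + real_of_int a2 / 2)^2))"
  unfolding theta_term_def by (simp add: Let_def quadZ_def algebra_simps)

lemma theta_term_summable:
  assumes Z: "Z \<in> siegel_H2" and a: "a1 \<in> {0, 1}" "a2 \<in> {0, 1}"
  shows "theta_term a1 a2 b1 b2 Z summable_on UNIV"
proof -
  obtain z0 z1 z2 where Z_eq: "Z = (z0, z1, z2)"
    by (cases Z) auto
  have y0: "Im z0 > 0" and det: "Im z0 * Im z2 - (Im z1)^2 > 0"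
    using Z Z_eq by (auto simp: siegel_H2_def)
  define mu where "mu = (Im z0 * Im z2 - (Im z1)^2) / (2 * (Im z0 + Im z2))"
  have "mu > 0"
    using pos_def_binary_form_ge(1)[OF y0 det] unfolding mu_def .
  then have pi_mu: "pi * mu > 0"
    by simp
  define u where "u g = exp (- (pi * mu) * (real_of_int g + real_of_int a1 / 2)^2)" for g :: int
  define v where "v g = exp (- (pi * mu) * (real_of_int g + real_of_int a2 / 2)^2)" for g :: int
  have "u summable_on UNIV"
    unfolding u_def by (rule summable_on_gaussian_int[OF pi_mu]) (use a in auto)
  moreover have "v summable_on UNIV"
    unfolding v_def by (rule summable_on_gaussian_int[OF pi_mu]) (use a in auto)
  ultimately have uv: "(\<lambda>(g1, g2). u g1 * v g2) summable_on UNIV"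
    by (rule summable_on_mult_nonneg) (simp_all add: u_def v_def)
  have "(\<lambda>g. norm (theta_term a1 a2 b1 b2 Z g)) summable_on UNIV"
  proof (rule Infinite_Sum.abs_summable_on_comparison_test'[OF uv])
    fix g :: "int \<times> int"
    obtain g1 g2 where g: "g = (g1, g2)"
      by (cases g) auto
    define x1 where "x1 = real_of_int g1 + real_of_int a1 / 2"
    define x2 where "x2 = real_of_int g2 + real_of_int a2 / 2"
    have "norm (theta_term a1 a2 b1 b2 Z g) = exp (- pi * (Im z0 * x1^2 + 2 * Im z1 * x1 * x2 + Im z2 * x2^2))"
      unfolding Z_eq g norm_theta_term x1_def x2_def ..
    also have "\<dots> \<le> exp (- pi * (mu * x1^2 + mu * x2^2))"
      using pos_def_binary_form_ge(2)[OF y0 det] by (simp add: mu_def)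
    also have "\<dots> = u g1 * v g2"
      unfolding u_def v_def x1_def[symmetric] x2_def[symmetric] exp_add[symmetric]
      by (simp add: algebra_simps)
    finally show "norm (theta_term a1 a2 b1 b2 Z g) \<le> (case g of (g1, g2) \<Rightarrow> u g1 * v g2)"
      using g by simp
  qed
  then show ?thesis
    by (simp add: summable_on_iff_abs_summable_on_complex)
qed

definition theta_coeff :: "int \<Rightarrow> int \<Rightarrow> int \<Rightarrow> int \<Rightarrow> nat \<times> nat \<times> nat \<Rightarrow> complex" where
  "theta_coeff a1 a2 b1 b2 k = (\<Sum>g | theta_exponents a1 a2 g = k. theta_sign a1 a2 b1 b2 g)"

lemma finite_theta_exponents_fibre: "finite {g. theta_exponents a1 a2 g = k}"
proof -
  obtain k0 k1 k2 where k: "k = (k0, k1, k2)"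
    by (cases k) auto
  define B1 where "B1 = int k0 + \<bar>a1\<bar>"
  define B2 where "B2 = int k2 + \<bar>a2\<bar>"
  have "{g. theta_exponents a1 a2 g = k} \<subseteq> {-B1..B1} \<times> {-B2..B2}"
  proof
    fix g
    assume g: "g \<in> {g. theta_exponents a1 a2 g = k}"
    obtain g1 g2 where g_eq: "g = (g1, g2)"
      by (cases g)
    from g have "(2 * g1 + a1)^2 = int k0" "(2 * g2 + a2)^2 = int k2"
      by (auto simp: theta_exponents_def k g_eq)
    then have "\<bar>2 * g1 + a1\<bar> \<le> int k0" "\<bar>2 * g2 + a2\<bar> \<le> int k2"
      using abs_le_power2_int by metis+
    then show "g \<in> {-B1..B1} \<times> {-B2..B2}"
      unfolding g_eq B1_def B2_def by auto
  qed
  then show ?thesis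
    by (rule finite_subset) simp
qed

lemma theta_has_q_expansion:
  assumes a: "a1 \<in> {0, 1}" "a2 \<in> {0, 1}"
  shows "is_q_expansion (theta_coeff a1 a2 b1 b2) (theta_const a1 a2 b1 b2)"
  unfolding is_q_expansion_def
proof
  fix Z
  assume Z: "Z \<in> siegel_H2"
  obtain q0 q1 q2 where q: "qcoords Z = (q0, q1, q2)"
    by (cases "qcoords Z") auto
  have "(theta_term a1 a2 b1 b2 Z has_sum theta_const a1 a2 b1 b2 Z) UNIV"
    unfolding theta_const_eq_infsum using theta_term_summable[OF Z a] by (rule has_sum_infsum)
  moreover have bij: "bij_betw (\<lambda>g. (theta_exponents a1 a2 g, g)) UNIV
      (Sigma UNIV (\<lambda>k. {g. theta_exponents a1 a2 g = k}))"
    by (rule bij_betwI[where g = snd]) auto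
  ultimately have "((\<lambda>(k, g). theta_term a1 a2 b1 b2 Z g) has_sum theta_const a1 a2 b1 b2 Z)
      (Sigma UNIV (\<lambda>k. {g. theta_exponents a1 a2 g = k}))"
    using has_sum_reindex_bij_betw[OF bij, of "\<lambda>(k, g). theta_term a1 a2 b1 b2 Z g"] by simp
  then have "((\<lambda>k. theta_coeff a1 a2 b1 b2 k * q_monomial (qcoords Z) k) has_sum theta_const a1 a2 b1 b2 Z) UNIV"
  proof (rule has_sum_Sigma')
    fix k
    have "(\<Sum>g | theta_exponents a1 a2 g = k. theta_term a1 a2 b1 b2 Z g) =
        (\<Sum>g | theta_exponents a1 a2 g = k. theta_sign a1 a2 b1 b2 g * q_monomial (qcoords Z) k)"
      by (rule sum.cong) (auto simp: theta_term_eq_sign_mult_monomial)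
    also have "\<dots> = theta_coeff a1 a2 b1 b2 k * q_monomial (qcoords Z) k"
      unfolding theta_coeff_def by (rule sum_distrib_right[symmetric])
    finally show "((\<lambda>g. case (k, g) of (k, g) \<Rightarrow> theta_term a1 a2 b1 b2 Z g) has_sum
        theta_coeff a1 a2 b1 b2 k * q_monomial (qcoords Z) k) {g. theta_exponents a1 a2 g = k}"
      using finite_theta_exponents_fibre by (simp add: has_sum_finiteI)
  qed
  moreover have "(\<lambda>k. theta_coeff a1 a2 b1 b2 k * q_monomial (qcoords Z) k) =
      (\<lambda>(k0, k1, k2). theta_coeff a1 a2 b1 b2 (k0, k1, k2) * q0 ^ k0 * q1 ^ k1 * q2 ^ k2)"
    by (auto simp: q_monomial_def q mult_ac)
  ultimately show "case qcoords Z of (q0, q1, q2) \<Rightarrow>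
      ((\<lambda>(k0, k1, k2). theta_coeff a1 a2 b1 b2 (k0, k1, k2) * q0 ^ k0 * q1 ^ k1 * q2 ^ k2) has_sum
        theta_const a1 a2 b1 b2 Z) UNIV"
    unfolding q by simp
qed

lemma theta_exponents_ge:
  assumes "a1 \<in> {0, 1}" "a2 \<in> {0, 1}" and "theta_exponents a1 a2 g = (k0, k1, k2)"
  shows "nat (a1^2) \<le> k0 \<and> nat ((a1 - a2)^2) \<le> k1 \<and> nat (a2^2) \<le> k2"
proof -
  obtain g1 g2 where g: "g = (g1, g2)"
    by (cases g) auto
  have "nat (a1^2) \<le> nat ((2 * g1 + a1)^2)"
    and "nat ((a1 - a2)^2) \<le> nat ((2 * (g1 - g2) + (a1 - a2))^2)"
    and "nat (a2^2) \<le> nat ((2 * g2 + a2)^2)"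
    using assms(1,2) by (intro nat_mono power2_le_power2_two_mult_add; auto)+
  moreover have "nat ((2 * g1 + a1)^2) = k0" "nat ((2 * (g1 - g2) + (a1 - a2))^2) = k1"
      "nat ((2 * g2 + a2)^2) = k2"
    using assms(3) unfolding g theta_exponents_def prod.case prod.inject by blast+
  ultimately show ?thesis
    by simp
qed

lemma theta_exponents_eq_min_iff:
  "theta_exponents a1 a2 g = (nat (a1^2), nat ((a1 - a2)^2), nat (a2^2)) \<longleftrightarrow> g = (0, 0) \<or> g = (- a1, - a2)"
proof -
  obtain g1 g2 where g: "g = (g1, g2)"
    by (cases g) auto
  have "theta_exponents a1 a2 g = (nat (a1^2), nat ((a1 - a2)^2), nat (a2^2)) \<longleftrightarrow>
      (2 * g1 + a1)^2 = a1^2 \<and> (2 * (g1 - g2) + (a1 - a2))^2 = (a1 - a2)^2 \<and> (2 * g2 + a2)^2 = a2^2"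
    unfolding theta_exponents_def g prod.case prod.inject
    by (simp only: eq_nat_nat_iff zero_le_power2)
  also have "\<dots> \<longleftrightarrow> (g1 = 0 \<or> g1 = - a1) \<and> (g1 - g2 = 0 \<or> g1 - g2 = - (a1 - a2)) \<and> (g2 = 0 \<or> g2 = - a2)"
    unfolding power2_two_mult_add_eq_iff ..
  also have "\<dots> \<longleftrightarrow> g = (0, 0) \<or> g = (- a1, - a2)"
    unfolding g prod.inject by arith
  finally show ?thesis .
qed

lemma theta_sign_neg_eq:
  assumes "even (a1 * b1 + a2 * b2)"
  shows "theta_sign a1 a2 b1 b2 (- a1, - a2) = theta_sign a1 a2 b1 b2 (0, 0)"
proof -
  obtain m where "a1 * b1 + a2 * b2 = 2 * m"
    using assms by blast
  then have "real_of_int a1 * b1 + real_of_int a2 * b2 = 2 * real_of_int m"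
    by (metis of_int_add of_int_mult of_int_numeral)
  then have at_0: "real_of_int b1 * (real_of_int 0 + real_of_int a1 / 2) + real_of_int b2 * (real_of_int 0 + real_of_int a2 / 2) = m"
    and at_neg: "real_of_int b1 * (real_of_int (- a1) + real_of_int a1 / 2) + real_of_int b2 * (real_of_int (- a2) + real_of_int a2 / 2) = - m"
    by (simp_all add: algebra_simps)
  have "theta_sign a1 a2 b1 b2 (0, 0) = theta_sign a1 a2 b1 b2 (- a1, - a2) * exp (2 * of_int m * pi * \<i>)"
    unfolding theta_sign_def prod.case at_0 at_neg by (subst exp_add[symmetric]) (simp add: algebra_simps)
  then show ?thesis
    using exp_integer_2pi[of "of_int m"] by simp
qed

lemma theta_coeff_nonzero_imp_exponent:
  assumes "theta_coeff a1 a2 b1 b2 k \<noteq> 0"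
  obtains g where "theta_exponents a1 a2 g = k"
proof -
  have "{g. theta_exponents a1 a2 g = k} \<noteq> {}"
    using assms unfolding theta_coeff_def by (metis sum.empty)
  then show ?thesis
    using that by blast
qed

lemma theta_coeff_min_nonzero:
  assumes "even (a1 * b1 + a2 * b2)"
  shows "theta_coeff a1 a2 b1 b2 (nat (a1^2), nat ((a1 - a2)^2), nat (a2^2)) \<noteq> 0"
proof -
  have "{g. theta_exponents a1 a2 g = (nat (a1^2), nat ((a1 - a2)^2), nat (a2^2))} = {(0, 0), (- a1, - a2)}"
    unfolding theta_exponents_eq_min_iff by blast
  then have "theta_coeff a1 a2 b1 b2 (nat (a1^2), nat ((a1 - a2)^2), nat (a2^2)) =
      (\<Sum>g \<in> {(0, 0), (- a1, - a2)}. theta_sign a1 a2 b1 b2 g)"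
    unfolding theta_coeff_def by (rule arg_cong)
  also have "\<dots> = (if (a1, a2) = (0, 0) then 1 else 2) * theta_sign a1 a2 b1 b2 (0, 0)"
    using theta_sign_neg_eq[OF assms] by (cases "(a1, a2) = (0, 0)") auto
  also have "\<dots> \<noteq> 0"
    unfolding theta_sign_def by simp
  finally show ?thesis .
qed

theorem lemma2p3:
  fixes a1 a2 b1 b2 :: int
  assumes "a1 \<in> {0, 1}" and "a2 \<in> {0, 1}" and "b1 \<in> {0, 1}" and "b2 \<in> {0, 1}"
    and "even (a1 * b1 + a2 * b2)"
  shows "(\<exists>c. is_q_expansion c (theta_const a1 a2 b1 b2)) \<and>
         (\<forall>c. is_q_expansion c (theta_const a1 a2 b1 b2) \<longrightarrow>
            int (mult_q0 c) = a1 \<and> int (mult_q2 c) = a2 \<and>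
            int (mult_q1 c) = a1 + a2 - 2 * a1 * a2)"
proof (intro conjI allI impI)
  have theta: "is_q_expansion (theta_coeff a1 a2 b1 b2) (theta_const a1 a2 b1 b2)"
    using assms(1,2) by (rule theta_has_q_expansion)
  then show "\<exists>c. is_q_expansion c (theta_const a1 a2 b1 b2)"
    by blast
  fix c
  assume "is_q_expansion c (theta_const a1 a2 b1 b2)"
  then have "c = theta_coeff a1 a2 b1 b2"
    using theta q_expansion_unique by blast
  moreover have "nat (a1^2) \<le> l0 \<and> nat ((a1 - a2)^2) \<le> l1 \<and> nat (a2^2) \<le> l2"
    if "theta_coeff a1 a2 b1 b2 (l0, l1, l2) \<noteq> 0" for l0 l1 l2
    using that by (elim theta_coeff_nonzero_imp_exponent) (rule theta_exponents_ge[OF assms(1,2)])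
  ultimately have "mult_q0 c = nat (a1^2)" "mult_q1 c = nat ((a1 - a2)^2)" "mult_q2 c = nat (a2^2)"
    using mult_q_eqI[of "theta_coeff a1 a2 b1 b2", OF theta_coeff_min_nonzero[OF assms(5)]] by simp_all
  then show "int (mult_q0 c) = a1" "int (mult_q2 c) = a2" "int (mult_q1 c) = a1 + a2 - 2 * a1 * a2"
    using assms(1,2) by (auto simp: power2_eq_square)
qed

end
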